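(* Under the standing assumptions on $f$, let $\ell>0$, $\beta=\ell d$, let $x_1,\dots,x_d$ be i.i.d. with density $f^\beta/N(\beta)$ and, independently, $y_1,\dots,y_d$ i.i.d. $N(0,(\beta|H|)^{-1})$. Then $$T_1(d):=\sum_{i=1}^d\frac{\beta\,h''''(0)}{24}\left(y_i^4-x_i^4\right)\to0\quad\text{in probability as }d\to\infty.$$
   Context: Standing assumptions: $f:\mathbb{R}\to(0,\infty)$ is an unnormalised univariate density with $f\in C^5$, $f(0)=1$, $f'(0)=0$, and $0$ is the unique global maximiser of $f$. Let $h:=\log f$ and $H:=h''(0)$, assumed $H<0$; there is $L>0$ with $|h^{(5)}(x)|<L$ for all $x\in\mathbb{R}$. Polynomial tails: there exist $\gamma,M,K>0$ with $\sup_{|x|>M} f(x)|x|^{\gamma}<K$. Dutchman's cap condition: there exists $\delta_2\in(0,M)$ such that $f(x)\le\exp(-x^2|H|/4)$ for $|x|<\delta_2$ and $f(x)\le\exp(-\delta_2^2|H|/4)$ for $\delta_2\le|x|\le M$. Normalisation: $N(\beta):=\int_{\mathbb{R}}f(x)^\beta\,dx$. *)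

theory Defs
  imports "HOL-Probability.Probability"
begin

definition Nconst :: "(real \<Rightarrow> real) \<Rightarrow> real \<Rightarrow> real" where
  "Nconst f \<beta> = (\<integral>x. f x powr \<beta> \<partial>lborel)"

definition tilted_measure :: "(real \<Rightarrow> real) \<Rightarrow> real \<Rightarrow> real measure" where
  "tilted_measure f \<beta> = density lborel (\<lambda>x. ennreal (f x powr \<beta> / Nconst f \<beta>))"

text \<open>Joint law of (x_1..x_d, y_1..y_d): x_i iid with density f^beta/N(beta),
  independently y_i iid N(0, 1/(beta |H|)) (standard deviation 1/sqrt(beta |H|)).\<close>
definition joint_measure ::
  "(real \<Rightarrow> real) \<Rightarrow> real \<Rightarrow> real \<Rightarrow> nat \<Rightarrow> ((nat \<Rightarrow> real) \<times> (nat \<Rightarrow> real)) measure" where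
  "joint_measure f H \<beta> d =
     (PiM {..<d} (\<lambda>i. tilted_measure f \<beta>)) \<Otimes>\<^sub>M
     (PiM {..<d} (\<lambda>i. density lborel (normal_density 0 (1 / sqrt (\<beta> * \<bar>H\<bar>)))))"

end

theory Submission
  imports Defs "HOL-Real_Asymp.Real_Asymp"
begin

(*
  Write beta = l d and a = h''''(0)/24. By the second moment (Markov) bound, P(|T1| > eps) is at
  most 3 (beta a)^2 (d E y^8 + d E x^8 + d^2 (E y^4 - E x^4)^2) / eps^2. For the Gaussian,
  beta^j E y^(2j) is exactly the 2j-th moment of N(0, 1/|H|). For the tilted law the same holds in
  the limit by Laplace's method: after substituting x = u / sqrt beta, f(u / sqrt beta)^beta tends to
  exp(H u^2 / 2) by the second order Taylor expansion of log f, the Dutchman's cap provides a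
  Gaussian dominating function on [-M, M], and outside [-M, M] the integrand is O(q^beta) for some
  q < 1. Hence the variance terms are O(beta^3 / beta^4), and the bias term beta^4 (E y^4 - E x^4)^2
  vanishes because beta^2 E y^4 and beta^2 E x^4 both tend to 3 / H^2.
*)

lemma integrable_inverse_square_outside:
  fixes M :: real assumes "M > 0"
  shows "integrable lborel (\<lambda>x. indicator {x. M \<le> \<bar>x\<bar>} x * \<bar>x\<bar> powr -2)"
proof -
  define g where "g = (\<lambda>x::real. indicator {M..} x * x powr -2)"
  have "g = (\<lambda>x. if x \<in> {M..} then x powr -2 else 0)"
    unfolding g_def by (auto simp: indicator_def fun_eq_iff)
  moreover have "((\<lambda>x. x powr -2) has_integral (-(M powr (-2+1)) / (-2+1))) {M..}"
    by (rule has_integral_powr_to_inf) (use assms in auto)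
  ultimately have "(g has_integral M powr -1) UNIV"
    by (simp only: has_integral_restrict_UNIV) simp
  then have "integral\<^sup>N lborel g = M powr -1"
    by (intro nn_integral_has_integral_lborel) (auto simp: g_def)
  then have g: "integrable lborel g"
    by (intro integrableI_nonneg) (auto simp: g_def)
  have "integrable lborel (\<lambda>x. g x + g (0 + (-1) * x))"
    using g lborel_integrable_real_affine[OF g, of "-1" 0] by simp
  also have "(\<lambda>x. g x + g (0 + (-1) * x)) = (\<lambda>x. indicator {x. M \<le> \<bar>x\<bar>} x * \<bar>x\<bar> powr -2)"
    using assms by (auto simp: g_def indicator_def fun_eq_iff)
  finally show ?thesis .
qed

lemma integrable_power_exp_quadratic:
  fixes c :: real assumes "c > 0"
  shows "integrable lborel (\<lambda>u. \<bar>u\<bar> ^ k * exp (- (c * u\<^sup>2)))"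
proof -
  define \<sigma> where "\<sigma> = 1 / sqrt (2 * c)"
  have \<sigma>: "\<sigma> > 0" "\<sigma>\<^sup>2 = 1 / (2 * c)" using assms by (simp_all add: \<sigma>_def power_divide)
  have "integrable lborel (\<lambda>u. sqrt (2 * pi * \<sigma>\<^sup>2) * (normal_density 0 \<sigma> u * \<bar>u - 0\<bar> ^ k))"
    by (intro integrable_mult_right integrable_normal_moment_abs \<sigma>)
  also have "(\<lambda>u. sqrt (2 * pi * \<sigma>\<^sup>2) * (normal_density 0 \<sigma> u * \<bar>u - 0\<bar> ^ k))
             = (\<lambda>u. \<bar>u\<bar> ^ k * exp (- (c * u\<^sup>2)))"
    using \<sigma> assms by (auto simp: normal_density_def fun_eq_iff field_simps)
  finally show ?thesis .
qed

lemma integral_even_power_exp_quadratic: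
  fixes H :: real assumes "H < 0"
  shows "(\<integral>u. u ^ (2 * j) * exp (H * u\<^sup>2 / 2) \<partial>lborel)
           = sqrt (2 * pi / \<bar>H\<bar>) * (fact (2 * j) / ((2 * \<bar>H\<bar>) ^ j * fact j))"
proof -
  define \<sigma> where "\<sigma> = 1 / sqrt \<bar>H\<bar>"
  have \<sigma>: "\<sigma> > 0" "\<sigma>\<^sup>2 = 1 / \<bar>H\<bar>" using assms by (simp_all add: \<sigma>_def power_divide)
  have "(\<lambda>u. u ^ (2 * j) * exp (H * u\<^sup>2 / 2))
        = (\<lambda>u. sqrt (2 * pi * \<sigma>\<^sup>2) * (normal_density 0 \<sigma> u * (u - 0) ^ (2 * j)))"
    using \<sigma>(1) by (intro ext) (simp add: normal_density_def, use assms in \<open>simp add: \<sigma>(2)\<close>)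
  then have "(\<integral>u. u ^ (2 * j) * exp (H * u\<^sup>2 / 2) \<partial>lborel)
             = sqrt (2 * pi * \<sigma>\<^sup>2) * (fact (2 * j) / ((2 / \<sigma>\<^sup>2) ^ j * fact j))"
    by (simp only: integral_mult_right_zero integral_normal_moment_even[OF \<sigma>(1)])
  then show ?thesis
    by (simp add: \<sigma>(2))
qed

lemma normal_density_even_moment:
  fixes \<sigma> :: real assumes "\<sigma> > 0"
  shows "integrable (density lborel (normal_density 0 \<sigma>)) (\<lambda>x. x ^ (2 * j))"
    and "(\<integral>x. x ^ (2 * j) \<partial>density lborel (normal_density 0 \<sigma>)) = fact (2 * j) / ((2 / \<sigma>\<^sup>2) ^ j * fact j)"
  using integrable_normal_moment[OF assms, of 0 "2 * j"] integral_normal_moment_even[OF assms, of 0 j]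
  by (simp_all add: integrable_density integral_density)

lemma normal_density_rescaled_moment:
  fixes \<beta> H :: real assumes "\<beta> > 0" "H \<noteq> 0"
  shows "\<beta> ^ j * (\<integral>x. x ^ (2 * j) \<partial>density lborel (normal_density 0 (1 / sqrt (\<beta> * \<bar>H\<bar>))))
           = fact (2 * j) / ((2 * \<bar>H\<bar>) ^ j * fact j)"
proof -
  have "0 < 1 / sqrt (\<beta> * \<bar>H\<bar>)" "(1 / sqrt (\<beta> * \<bar>H\<bar>))\<^sup>2 = 1 / (\<beta> * \<bar>H\<bar>)"
    using assms by (simp_all add: power_divide)
  then show ?thesis
    using assms by (simp add: normal_density_even_moment power_mult_distrib)
qed

lemma gaussian_fourth_moment_ratio:
  fixes H :: real assumes "H < 0"
  shows "(\<integral>u. u ^ 4 * exp (H * u\<^sup>2 / 2) \<partial>lborel) / (\<integral>u. exp (H * u\<^sup>2 / 2) \<partial>lborel) = 3 / H\<^sup>2"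
  using integral_even_power_exp_quadratic[OF assms, of 2] integral_even_power_exp_quadratic[OF assms, of 0] assms
  by (simp add: eval_nat_numeral fact_numeral power2_eq_square)

lemma (in pair_prob_space) integrable_integral_comp_fst:
  fixes g :: "'a \<Rightarrow> 'c::{banach, second_countable_topology}"
  assumes "integrable M1 g"
  shows "integrable (M1 \<Otimes>\<^sub>M M2) (\<lambda>\<omega>. g (fst \<omega>))"
    and "(\<integral>\<omega>. g (fst \<omega>) \<partial>(M1 \<Otimes>\<^sub>M M2)) = (\<integral>x. g x \<partial>M1)"
proof -
  have marginal: "distr (M1 \<Otimes>\<^sub>M M2) M1 fst = M1"
    by (rule M2.distr_pair_fst)
  have "g \<in> borel_measurable M1" using assms by auto
  then show "integrable (M1 \<Otimes>\<^sub>M M2) (\<lambda>\<omega>. g (fst \<omega>))"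
    and "(\<integral>\<omega>. g (fst \<omega>) \<partial>(M1 \<Otimes>\<^sub>M M2)) = (\<integral>x. g x \<partial>M1)"
    using assms integrable_distr_eq[of fst "M1 \<Otimes>\<^sub>M M2" M1 g] integral_distr[of fst "M1 \<Otimes>\<^sub>M M2" M1 g]
    by (simp_all add: marginal)
qed

lemma (in pair_prob_space) integrable_integral_comp_snd:
  fixes g :: "'b \<Rightarrow> 'c::{banach, second_countable_topology}"
  assumes "integrable M2 g"
  shows "integrable (M1 \<Otimes>\<^sub>M M2) (\<lambda>\<omega>. g (snd \<omega>))"
    and "(\<integral>\<omega>. g (snd \<omega>) \<partial>(M1 \<Otimes>\<^sub>M M2)) = (\<integral>x. g x \<partial>M2)"
proof -
  have marginal: "distr (M1 \<Otimes>\<^sub>M M2) M2 snd = M2"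
  proof (rule measure_eqI)
    fix A assume "A \<in> sets (distr (M1 \<Otimes>\<^sub>M M2) M2 snd)"
    then have A: "A \<in> sets M2" by simp
    then have "emeasure (distr (M1 \<Otimes>\<^sub>M M2) M2 snd) A = emeasure (M1 \<Otimes>\<^sub>M M2) (space M1 \<times> A)"
      by (auto simp: emeasure_distr space_pair_measure dest: sets.sets_into_space
          intro!: arg_cong2[where f=emeasure])
    with A show "emeasure (distr (M1 \<Otimes>\<^sub>M M2) M2 snd) A = emeasure M2 A"
      by (simp add: M2.emeasure_pair_measure_Times M1.emeasure_space_1)
  qed simp
  have "g \<in> borel_measurable M2" using assms by auto
  then show "integrable (M1 \<Otimes>\<^sub>M M2) (\<lambda>\<omega>. g (snd \<omega>))"
    and "(\<integral>\<omega>. g (snd \<omega>) \<partial>(M1 \<Otimes>\<^sub>M M2)) = (\<integral>x. g x \<partial>M2)"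
    using assms integrable_distr_eq[of snd "M1 \<Otimes>\<^sub>M M2" M2 g] integral_distr[of snd "M1 \<Otimes>\<^sub>M M2" M2 g]
    by (simp_all add: marginal)
qed

lemma (in prob_space) integral_PiM_centered_sum_square:
  fixes g :: "'a \<Rightarrow> real"
  assumes g: "integrable M g" and g2: "integrable M (\<lambda>x. (g x)\<^sup>2)"
  shows "integrable (PiM {..<d} (\<lambda>_. M)) (\<lambda>\<omega>. (\<Sum>i<d. g (\<omega> i) - expectation g)\<^sup>2)"
    and "(\<integral>\<omega>. (\<Sum>i<d. g (\<omega> i) - expectation g)\<^sup>2 \<partial>PiM {..<d} (\<lambda>_. M)) = real d * variance g"
proof -
  interpret PS: product_prob_space "\<lambda>_. M" ..
  let ?P = "PiM {..<d} (\<lambda>_. M)"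
  define c where "c = (\<lambda>x. g x - expectation g)"
  have c: "integrable M c" "integrable M (\<lambda>x. c x * c x)" and c0: "expectation c = 0"
    using g g2 by (auto simp: c_def power2_eq_square algebra_simps prob_space)
  \<comment> \<open>writes \<open>c (\<omega> i) * c (\<omega> j)\<close> as a product over all coordinates, so that independence applies\<close>
  define F :: "nat \<Rightarrow> nat \<Rightarrow> nat \<Rightarrow> 'a \<Rightarrow> real"
    where "F = (\<lambda>i j k t. (if k = i then c t else 1) * (if k = j then c t else 1))"
  have F: "integrable M (F i j k)" for i j k
    using c by (cases "k = i"; cases "k = j") (auto simp: F_def)
  have prod_F: "(\<Prod>k<d. F i j k (\<omega> k)) = c (\<omega> i) * c (\<omega> j)" if "i < d" "j < d" for i j \<omega>
    using that by (simp add: F_def prod.distrib)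
  have cross: "integrable ?P (\<lambda>\<omega>. c (\<omega> i) * c (\<omega> j))"
    "(\<integral>\<omega>. c (\<omega> i) * c (\<omega> j) \<partial>?P) = (if i = j then variance g else 0)"
    if ij: "i < d" "j < d" for i j
  proof -
    show "integrable ?P (\<lambda>\<omega>. c (\<omega> i) * c (\<omega> j))"
      using PS.product_integrable_prod[of "{..<d}" "F i j"] F prod_F[OF ij] by simp
    have "(\<integral>\<omega>. c (\<omega> i) * c (\<omega> j) \<partial>?P) = (\<Prod>k<d. integral\<^sup>L M (F i j k))"
      using PS.product_integral_prod[of "{..<d}" "F i j"] F prod_F[OF ij] by simp
    also have "\<dots> = (if i = j then variance g else 0)"
    proof (cases "i = j")
      case True
      then have "(\<Prod>k<d. integral\<^sup>L M (F i j k)) = (\<Prod>k<d. if k = i then variance g else 1)"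
        by (intro prod.cong) (auto simp: F_def c_def power2_eq_square prob_space)
      then show ?thesis using True ij by simp
    next
      case False
      then have "integral\<^sup>L M (F i j i) = 0" using c0 by (simp add: F_def)
      then show ?thesis using False ij by (auto intro!: prod_zero)
    qed
    finally show "(\<integral>\<omega>. c (\<omega> i) * c (\<omega> j) \<partial>?P) = (if i = j then variance g else 0)" .
  qed
  have square: "(\<Sum>i<d. g (\<omega> i) - expectation g)\<^sup>2 = (\<Sum>i<d. \<Sum>j<d. c (\<omega> i) * c (\<omega> j))" for \<omega>
    unfolding power2_eq_square c_def by (rule sum_product)
  show "integrable ?P (\<lambda>\<omega>. (\<Sum>i<d. g (\<omega> i) - expectation g)\<^sup>2)"
    unfolding square by (auto intro!: cross)
  have "(\<integral>\<omega>. (\<Sum>i<d. g (\<omega> i) - expectation g)\<^sup>2 \<partial>?P) = (\<Sum>i<d. \<Sum>j<d. \<integral>\<omega>. c (\<omega> i) * c (\<omega> j) \<partial>?P)"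
    unfolding square
    by (subst Bochner_Integration.integral_sum)
      (auto intro!: Bochner_Integration.integrable_sum cross sum.cong Bochner_Integration.integral_sum)
  also have "\<dots> = (\<Sum>i<d. \<Sum>j<d. if i = j then variance g else 0)"
    by (intro sum.cong refl cross) auto
  finally show "(\<integral>\<omega>. (\<Sum>i<d. g (\<omega> i) - expectation g)\<^sup>2 \<partial>?P) = real d * variance g"
    by simp
qed

lemma square_diff_add_le: "((p::real) - q + r)\<^sup>2 \<le> 3 * (p\<^sup>2 + q\<^sup>2 + r\<^sup>2)"
proof -
  have "3 * (p\<^sup>2 + q\<^sup>2 + r\<^sup>2) - (p - q + r)\<^sup>2 = (p + q)\<^sup>2 + (p - r)\<^sup>2 + (q + r)\<^sup>2"
    by (simp add: power2_eq_square algebra_simps)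
  then show ?thesis by (smt (verit) zero_le_power2)
qed

lemma prob_abs_sum_diff_gt_le:
  fixes T G :: "'a measure" and g :: "'a \<Rightarrow> real" and a \<epsilon> :: real
  assumes T: "prob_space T" and G: "prob_space G"
    and gT: "integrable T g" "integrable T (\<lambda>x. (g x)\<^sup>2)"
    and gG: "integrable G g" "integrable G (\<lambda>x. (g x)\<^sup>2)"
    and \<epsilon>: "\<epsilon> > 0"
  shows "measure (PiM {..<d} (\<lambda>i. T) \<Otimes>\<^sub>M PiM {..<d} (\<lambda>i. G))
           {\<omega> \<in> space (PiM {..<d} (\<lambda>i. T) \<Otimes>\<^sub>M PiM {..<d} (\<lambda>i. G)).
              \<bar>\<Sum>i<d. a * (g (snd \<omega> i) - g (fst \<omega> i))\<bar> > \<epsilon>}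
         \<le> 3 * a\<^sup>2 * (real d * (\<integral>x. (g x)\<^sup>2 \<partial>G) + real d * (\<integral>x. (g x)\<^sup>2 \<partial>T)
               + (real d * ((\<integral>x. g x \<partial>G) - (\<integral>x. g x \<partial>T)))\<^sup>2) / \<epsilon>\<^sup>2"
proof -
  interpret T: prob_space T by (rule T)
  interpret G: prob_space G by (rule G)
  define X where "X = PiM {..<d} (\<lambda>i. T)"
  define Y where "Y = PiM {..<d} (\<lambda>i. G)"
  have "prob_space X" "prob_space Y"
    unfolding X_def Y_def by (auto intro: prob_space_PiM T G)
  then interpret XY: pair_prob_space X Y
    by (intro pair_prob_space.intro pair_sigma_finite.intro prob_space_imp_sigma_finite)
  define A where "A = (\<lambda>\<omega>. \<Sum>i<d. g (\<omega> i) - T.expectation g)"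
  define B where "B = (\<lambda>\<omega>. \<Sum>i<d. g (\<omega> i) - G.expectation g)"
  define D where "D = real d * (G.expectation g - T.expectation g)"
  define u where "u = (\<lambda>\<omega>. 3 * a\<^sup>2 * ((B (snd \<omega>))\<^sup>2 + (A (fst \<omega>))\<^sup>2 + D\<^sup>2))"
  define S where "S = (\<lambda>\<omega>::(nat \<Rightarrow> 'a) \<times> (nat \<Rightarrow> 'a). \<Sum>i<d. a * (g (snd \<omega> i) - g (fst \<omega> i)))"
  have A: "integrable X (\<lambda>\<omega>. (A \<omega>)\<^sup>2)" "(\<integral>\<omega>. (A \<omega>)\<^sup>2 \<partial>X) = real d * T.variance g"
    using T.integral_PiM_centered_sum_square[OF gT] by (simp_all add: A_def X_def)
  have B: "integrable Y (\<lambda>\<omega>. (B \<omega>)\<^sup>2)" "(\<integral>\<omega>. (B \<omega>)\<^sup>2 \<partial>Y) = real d * G.variance g"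
    using G.integral_PiM_centered_sum_square[OF gG] by (simp_all add: B_def Y_def)
  have "T.variance g \<le> (\<integral>x. (g x)\<^sup>2 \<partial>T)" "G.variance g \<le> (\<integral>x. (g x)\<^sup>2 \<partial>G)"
    using T.variance_eq[OF gT] G.variance_eq[OF gG] by simp_all
  then have Eu: "(\<integral>\<omega>. u \<omega> \<partial>(X \<Otimes>\<^sub>M Y))
      \<le> 3 * a\<^sup>2 * (real d * (\<integral>x. (g x)\<^sup>2 \<partial>G) + real d * (\<integral>x. (g x)\<^sup>2 \<partial>T) + D\<^sup>2)"
    using XY.integrable_integral_comp_fst[OF A(1)] XY.integrable_integral_comp_snd[OF B(1)]
    by (simp add: u_def A(2) B(2) XY.prob_space mult_left_mono add_mono)
  have u: "integrable (X \<Otimes>\<^sub>M Y) u"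
    using XY.integrable_integral_comp_fst[OF A(1)] XY.integrable_integral_comp_snd[OF B(1)]
    by (simp add: u_def)
  have Su: "(S \<omega>)\<^sup>2 \<le> u \<omega>" for \<omega>
  proof -
    have "S \<omega> = a * (B (snd \<omega>) - A (fst \<omega>) + D)"
      unfolding S_def A_def B_def D_def
      by (simp add: sum_distrib_left[symmetric] sum_subtractf algebra_simps)
    then have "(S \<omega>)\<^sup>2 = a\<^sup>2 * (B (snd \<omega>) - A (fst \<omega>) + D)\<^sup>2"
      by (simp add: power_mult_distrib)
    also have "\<dots> \<le> a\<^sup>2 * (3 * ((B (snd \<omega>))\<^sup>2 + (A (fst \<omega>))\<^sup>2 + D\<^sup>2))"
      by (intro mult_left_mono square_diff_add_le) auto
    finally show ?thesis by (simp add: u_def algebra_simps)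
  qed
  have "{\<omega> \<in> space (X \<Otimes>\<^sub>M Y). \<epsilon> < \<bar>S \<omega>\<bar>} \<subseteq> {\<omega> \<in> space (X \<Otimes>\<^sub>M Y). \<epsilon>\<^sup>2 \<le> u \<omega>}"
  proof safe
    fix \<omega> assume "\<epsilon> < \<bar>S \<omega>\<bar>"
    then have "\<epsilon>\<^sup>2 \<le> (S \<omega>)\<^sup>2"
      using power_mono[of \<epsilon> "\<bar>S \<omega>\<bar>" 2] \<epsilon> by simp
    then show "\<epsilon>\<^sup>2 \<le> u \<omega>" using Su order.trans by blast
  qed
  then have "measure (X \<Otimes>\<^sub>M Y) {\<omega> \<in> space (X \<Otimes>\<^sub>M Y). \<epsilon> < \<bar>S \<omega>\<bar>}
      \<le> measure (X \<Otimes>\<^sub>M Y) {\<omega> \<in> space (X \<Otimes>\<^sub>M Y). \<epsilon>\<^sup>2 \<le> u \<omega>}"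
    using u by (intro XY.finite_measure_mono) auto
  also have "\<dots> \<le> (\<integral>\<omega>. u \<omega> \<partial>(X \<Otimes>\<^sub>M Y)) / \<epsilon>\<^sup>2"
    using u \<epsilon> by (intro integral_Markov_inequality_measure[of _ _ "space (X \<Otimes>\<^sub>M Y)"]) (auto simp: u_def)
  also have "\<dots> \<le> 3 * a\<^sup>2 * (real d * (\<integral>x. (g x)\<^sup>2 \<partial>G) + real d * (\<integral>x. (g x)\<^sup>2 \<partial>T) + D\<^sup>2) / \<epsilon>\<^sup>2"
    using Eu by (simp add: divide_right_mono)
  finally show ?thesis
    by (simp add: S_def D_def X_def Y_def)
qed

lemma sqrt_even_power:
  fixes \<beta> :: real assumes "0 \<le> \<beta>"
  shows "sqrt \<beta> ^ 4 = \<beta>\<^sup>2" "sqrt \<beta> ^ 8 = \<beta> ^ 4"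
proof -
  have "sqrt \<beta> ^ 4 = (sqrt \<beta>)\<^sup>2 ^ 2" "sqrt \<beta> ^ 8 = (sqrt \<beta>)\<^sup>2 ^ 4"
    by (simp_all flip: power_mult)
  then show "sqrt \<beta> ^ 4 = \<beta>\<^sup>2" "sqrt \<beta> ^ 8 = \<beta> ^ 4" using assms by simp_all
qed

lemma deviation_bound_tendsto_0:
  fixes g4 m4 g8 m8 :: "real \<Rightarrow> real" and l c A B :: real
  assumes g4: "((\<lambda>\<beta>. \<beta>\<^sup>2 * g4 \<beta>) \<longlongrightarrow> c) at_top" and m4: "((\<lambda>\<beta>. \<beta>\<^sup>2 * m4 \<beta>) \<longlongrightarrow> c) at_top"
    and g8: "((\<lambda>\<beta>. \<beta> ^ 4 * g8 \<beta>) \<longlongrightarrow> A) at_top" and m8: "((\<lambda>\<beta>. \<beta> ^ 4 * m8 \<beta>) \<longlongrightarrow> B) at_top"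
    and l: "l > 0"
  shows "((\<lambda>\<beta>. \<beta>\<^sup>2 * ((\<beta> / l) * g8 \<beta> + (\<beta> / l) * m8 \<beta> + ((\<beta> / l) * (g4 \<beta> - m4 \<beta>))\<^sup>2)) \<longlongrightarrow> 0) at_top"
proof -
  have lim: "filterlim (\<lambda>\<beta>::real. l * \<beta>) at_infinity at_top"
    using l by (intro filterlim_at_top_imp_at_infinity) real_asymp
  have "l\<^sup>2 \<noteq> 0" using l by simp
  then have "((\<lambda>\<beta>. (\<beta> ^ 4 * g8 \<beta> + \<beta> ^ 4 * m8 \<beta>) / (l * \<beta>) + (\<beta>\<^sup>2 * g4 \<beta> - \<beta>\<^sup>2 * m4 \<beta>)\<^sup>2 / l\<^sup>2)
      \<longlongrightarrow> 0 + (c - c)\<^sup>2 / l\<^sup>2) at_top"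
    by (intro tendsto_intros tendsto_divide_0[OF tendsto_add[OF g8 m8] lim] g4 m4)
  moreover have "\<forall>\<^sub>F \<beta> in at_top. (\<beta> ^ 4 * g8 \<beta> + \<beta> ^ 4 * m8 \<beta>) / (l * \<beta>) + (\<beta>\<^sup>2 * g4 \<beta> - \<beta>\<^sup>2 * m4 \<beta>)\<^sup>2 / l\<^sup>2
      = \<beta>\<^sup>2 * ((\<beta> / l) * g8 \<beta> + (\<beta> / l) * m8 \<beta> + ((\<beta> / l) * (g4 \<beta> - m4 \<beta>))\<^sup>2)"
    using eventually_gt_at_top[of 0]
    by eventually_elim (use l in \<open>simp add: field_simps power2_eq_square eval_nat_numeral\<close>)
  ultimately show ?thesis
    by (simp add: tendsto_cong)
qed

lemma tendsto_rescaled_second_order: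
  fixes h h1 h2 :: "real \<Rightarrow> real"
  assumes h: "\<And>x. (h has_real_derivative h1 x) (at x)"
    and h1: "\<And>x. (h1 has_real_derivative h2 x) (at x)"
    and h0: "h 0 = 0" "h1 0 = 0" and h2: "isCont h2 0"
  shows "((\<lambda>\<beta>. \<beta> * h (u / sqrt \<beta>)) \<longlongrightarrow> h2 0 * u\<^sup>2 / 2) at_top"
proof -
  have "\<exists>\<xi>. \<bar>\<xi>\<bar> \<le> \<bar>t\<bar> \<and> h t = h2 \<xi> / 2 * t\<^sup>2" for t
  proof -
    define D where "D = (\<lambda>n::nat. if n = 0 then h else if n = 1 then h1 else h2)"
    have "\<exists>\<xi>. \<bar>\<xi>\<bar> \<le> \<bar>t\<bar> \<and> h t = (\<Sum>m<2. D m 0 / fact m * t ^ m) + D 2 \<xi> / fact 2 * t ^ 2"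
      by (rule Maclaurin_bi_le) (use h h1 in \<open>auto simp: D_def less_2_cases_iff\<close>)
    then show ?thesis using h0 by (simp add: D_def numeral_2_eq_2)
  qed
  then have "\<forall>\<beta>. \<exists>\<xi>. \<bar>\<xi>\<bar> \<le> \<bar>u / sqrt \<beta>\<bar> \<and> h (u / sqrt \<beta>) = h2 \<xi> / 2 * (u / sqrt \<beta>)\<^sup>2"
    by blast
  from choice[OF this] obtain \<xi> where \<xi>: "\<And>\<beta>. \<bar>\<xi> \<beta>\<bar> \<le> \<bar>u / sqrt \<beta>\<bar>"
    "\<And>\<beta>. h (u / sqrt \<beta>) = h2 (\<xi> \<beta>) / 2 * (u / sqrt \<beta>)\<^sup>2"
    by blast
  have "(\<xi> \<longlongrightarrow> 0) at_top"
  proof (rule Lim_null_comparison)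
    show "\<forall>\<^sub>F \<beta> in at_top. norm (\<xi> \<beta>) \<le> \<bar>u\<bar> / sqrt \<beta>"
      using eventually_gt_at_top[of 0]
    proof eventually_elim
      case (elim \<beta>)
      then show ?case using \<xi>(1)[of \<beta>] by (simp add: abs_divide)
    qed
    show "((\<lambda>\<beta>. \<bar>u\<bar> / sqrt \<beta>) \<longlongrightarrow> 0) at_top" by real_asymp
  qed
  then have "((\<lambda>\<beta>. h2 (\<xi> \<beta>) * u\<^sup>2 / 2) \<longlongrightarrow> h2 0 * u\<^sup>2 / 2) at_top"
    by (auto intro!: tendsto_intros isCont_tendsto_compose[OF h2])
  moreover have "\<forall>\<^sub>F \<beta> in at_top. h2 (\<xi> \<beta>) * u\<^sup>2 / 2 = \<beta> * h (u / sqrt \<beta>)"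
    using eventually_gt_at_top[of 0] by eventually_elim (simp add: \<xi>(2) power_divide)
  ultimately show ?thesis by (rule Lim_transform_eventually)
qed

lemma tendsto_powr_rescaled:
  fixes f :: "real \<Rightarrow> real"
  assumes f_pos: "\<And>x. f x > 0"
    and f1: "\<And>x. (f has_real_derivative deriv f x) (at x)"
    and f2: "\<And>x. (deriv f has_real_derivative (deriv ^^ 2) f x) (at x)"
    and f2_cont: "isCont ((deriv ^^ 2) f) 0"
    and f0: "f 0 = 1" "deriv f 0 = 0"
  shows "((\<lambda>\<beta>. f (u / sqrt \<beta>) powr \<beta>) \<longlongrightarrow> exp ((deriv ^^ 2) (\<lambda>x. ln (f x)) 0 * u\<^sup>2 / 2)) at_top"
proof -
  define h1 where "h1 = (\<lambda>x. deriv f x / f x)"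
  define h2 where "h2 = (\<lambda>x. ((deriv ^^ 2) f x * f x - deriv f x * deriv f x) / (f x * f x))"
  have h: "((\<lambda>x. ln (f x)) has_real_derivative h1 x) (at x)" for x
    unfolding h1_def using f_pos[of x] by (auto intro!: derivative_eq_intros f1 simp: field_simps)
  have h1: "(h1 has_real_derivative h2 x) (at x)" for x
    unfolding h1_def h2_def using f_pos[of x] by (intro DERIV_divide f1 f2) auto
  have "deriv (\<lambda>x. ln (f x)) = h1"
    using h by (auto intro!: DERIV_imp_deriv ext)
  then have "(deriv ^^ 2) (\<lambda>x. ln (f x)) 0 = h2 0"
    using h1 by (simp add: numeral_2_eq_2 DERIV_imp_deriv)
  moreover have "isCont h2 0"
    unfolding h2_def using f_pos[of 0] f2_cont f1[THEN DERIV_isCont] f2[of 0, THEN DERIV_isCont]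
    by (intro continuous_intros) (auto simp: numeral_2_eq_2)
  then have "((\<lambda>\<beta>. \<beta> * ln (f (u / sqrt \<beta>))) \<longlongrightarrow> h2 0 * u\<^sup>2 / 2) at_top"
    by (intro tendsto_rescaled_second_order[OF h h1]) (simp_all add: f0 h1_def)
  then have "((\<lambda>\<beta>. exp (\<beta> * ln (f (u / sqrt \<beta>)))) \<longlongrightarrow> exp (h2 0 * u\<^sup>2 / 2)) at_top"
    by (rule tendsto_exp)
  moreover have "f x \<noteq> 0" for x
    using f_pos[of x] by simp
  ultimately show ?thesis
    by (simp add: powr_def mult.commute)
qed

lemma dutchmans_cap_imp_gaussian_bound:
  fixes f :: "real \<Rightarrow> real" and H \<delta> M x :: real
  assumes \<delta>: "0 < \<delta>" "\<delta> < M"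
    and inner: "\<forall>x. \<bar>x\<bar> < \<delta> \<longrightarrow> f x \<le> exp (- (x\<^sup>2 * \<bar>H\<bar> / 4))"
    and outer: "\<forall>x. \<delta> \<le> \<bar>x\<bar> \<and> \<bar>x\<bar> \<le> M \<longrightarrow> f x \<le> exp (- (\<delta>\<^sup>2 * \<bar>H\<bar> / 4))"
    and x: "\<bar>x\<bar> \<le> M"
  shows "f x \<le> exp (- (\<delta>\<^sup>2 * \<bar>H\<bar> / (4 * M\<^sup>2) * x\<^sup>2))"
proof -
  have "\<delta>\<^sup>2 / M\<^sup>2 \<le> 1" "x\<^sup>2 / M\<^sup>2 \<le> 1"
    using \<delta> x by (auto intro!: power_mono simp flip: abs_le_square_iff)
  have c: "\<delta>\<^sup>2 * \<bar>H\<bar> / (4 * M\<^sup>2) * x\<^sup>2 = \<delta>\<^sup>2 / M\<^sup>2 * (x\<^sup>2 * \<bar>H\<bar> / 4)"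
    "\<delta>\<^sup>2 * \<bar>H\<bar> / (4 * M\<^sup>2) * x\<^sup>2 = x\<^sup>2 / M\<^sup>2 * (\<delta>\<^sup>2 * \<bar>H\<bar> / 4)"
    by (simp_all add: field_simps)
  show ?thesis
  proof (cases "\<bar>x\<bar> < \<delta>")
    case True
    have "\<delta>\<^sup>2 / M\<^sup>2 * (x\<^sup>2 * \<bar>H\<bar> / 4) \<le> x\<^sup>2 * \<bar>H\<bar> / 4"
      using \<open>\<delta>\<^sup>2 / M\<^sup>2 \<le> 1\<close> by (intro mult_left_le_one_le) auto
    then show ?thesis
      using inner True unfolding c(1) by (meson exp_le_cancel_iff neg_le_iff_le order.trans)
  next
    case False
    have "x\<^sup>2 / M\<^sup>2 * (\<delta>\<^sup>2 * \<bar>H\<bar> / 4) \<le> \<delta>\<^sup>2 * \<bar>H\<bar> / 4"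
      using \<open>x\<^sup>2 / M\<^sup>2 \<le> 1\<close> by (intro mult_left_le_one_le) auto
    then show ?thesis
      using outer False x unfolding c(2) by (meson exp_le_cancel_iff neg_le_iff_le not_less order.trans)
  qed
qed

lemma uniform_bound_lt_1_outside:
  fixes f :: "real \<Rightarrow> real"
  assumes cont: "continuous_on UNIV f" and lt1: "\<And>x. x \<noteq> 0 \<Longrightarrow> f x < 1"
    and M: "M > 0" and K: "K > 0" and \<gamma>: "\<gamma> > 0"
    and tails: "\<And>x. \<bar>x\<bar> > M \<Longrightarrow> f x * \<bar>x\<bar> powr \<gamma> < K"
    and f_pos: "\<And>x. f x > 0"
  obtains q where "0 < q" "q < 1" "\<And>x. M < \<bar>x\<bar> \<Longrightarrow> f x \<le> q"
proof -
  define R where "R = M + (2 * K) powr (1 / \<gamma>)"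
  have "M < R" using K by (simp add: R_def)
  have far: "f x < 1 / 2" if "R < \<bar>x\<bar>" for x
  proof -
    have "2 * K = ((2 * K) powr (1 / \<gamma>)) powr \<gamma>" using K \<gamma> by (simp add: powr_powr)
    also have "\<dots> \<le> \<bar>x\<bar> powr \<gamma>"
      using that M \<gamma> by (intro powr_mono2) (auto simp: R_def)
    finally have "2 * K \<le> \<bar>x\<bar> powr \<gamma>" .
    moreover have "f x * \<bar>x\<bar> powr \<gamma> < K"
      using tails that \<open>M < R\<close> by simp
    ultimately have "f x * (2 * K) < K"
      using f_pos[of x] by (smt (verit) mult_left_mono)
    then show ?thesis using K by (simp add: field_simps)
  qed
  define S where "S = {-R..-M} \<union> {M..R}"
  have "compact S" "S \<noteq> {}" using \<open>M < R\<close> unfolding S_def by auto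
  then obtain x0 where x0: "x0 \<in> S" "\<And>y. y \<in> S \<Longrightarrow> f y \<le> f x0"
    using continuous_attains_sup[of S f] continuous_on_subset[OF cont] by auto
  show ?thesis
  proof
    show "0 < max (f x0) (1/2)" "max (f x0) (1/2) < 1"
      using lt1[of x0] x0(1) M by (auto simp: S_def)
    show "f x \<le> max (f x0) (1/2)" if "M < \<bar>x\<bar>" for x
    proof (cases "\<bar>x\<bar> \<le> R")
      case True
      then have "x \<in> S" using that by (auto simp: S_def abs_if split: if_splits)
      then show ?thesis using x0(2) by (simp add: le_max_iff_disj)
    next
      case False
      then show ?thesis using far[of x] by (simp add: le_max_iff_disj)
    qed
  qed
qed

lemma lborel_integral_rescaled_moment:
  fixes g :: "real \<Rightarrow> real" and s :: real
  assumes "s > 0"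
  shows "s ^ (k + 1) * (\<integral>x. x ^ k * g x \<partial>lborel) = (\<integral>u. u ^ k * g (u / s) \<partial>lborel)"
proof -
  have "(\<integral>x. x ^ k * g x \<partial>lborel) = \<bar>1 / s\<bar> *\<^sub>R (\<integral>u. (0 + 1 / s * u) ^ k * g (0 + 1 / s * u) \<partial>lborel)"
    by (rule lborel_integral_real_affine) (use assms in simp)
  then have "s ^ (k + 1) * (\<integral>x. x ^ k * g x \<partial>lborel) = (\<integral>u. s ^ k * ((u / s) ^ k * g (u / s)) \<partial>lborel)"
    using assms by simp
  also have "\<dots> = (\<integral>u. u ^ k * g (u / s) \<partial>lborel)"
    using assms by (simp add: power_divide)
  finally show ?thesis .
qed

text \<open>The constants \<open>c\<close> and \<open>q\<close> come from the Dutchman's cap and, respectively, from the unique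
  maximum together with the polynomial tail (lemmas above).\<close>

locale peaked_density =
  fixes f :: "real \<Rightarrow> real" and H M K \<gamma> c q :: real
  assumes f_pos: "\<And>x. f x > 0"
    and f_measurable [measurable]: "f \<in> borel_measurable borel"
    and f_le_1: "\<And>x. f x \<le> 1"
    and H_neg: "H < 0" and M_pos: "M > 0" and K_pos: "K > 0" and \<gamma>_pos: "\<gamma> > 0"
    and c_pos: "c > 0" and gaussian_cap: "\<And>x. \<bar>x\<bar> \<le> M \<Longrightarrow> f x \<le> exp (- (c * x\<^sup>2))"
    and q: "0 < q" "q < 1" and f_le_q: "\<And>x. M < \<bar>x\<bar> \<Longrightarrow> f x \<le> q"
    and tail: "\<And>x. M < \<bar>x\<bar> \<Longrightarrow> f x * \<bar>x\<bar> powr \<gamma> < K"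
    and tendsto_powr_rescaled_f: "\<And>u. ((\<lambda>\<beta>. f (u / sqrt \<beta>) powr \<beta>) \<longlongrightarrow> exp (H * u\<^sup>2 / 2)) at_top"
begin

lemma moment_integrand_bound:
  assumes \<beta>: "(real k + 2) / \<gamma> \<le> \<beta>"
  shows "\<bar>x ^ k * f x powr \<beta>\<bar>
           \<le> indicator {-M..M} x * M ^ k + K powr ((real k + 2) / \<gamma>) * (indicator {x. M \<le> \<bar>x\<bar>} x * \<bar>x\<bar> powr -2)"
proof (cases "\<bar>x\<bar> \<le> M")
  case True
  have "0 \<le> \<beta>" using \<beta> \<gamma>_pos by (smt (verit) divide_nonneg_pos of_nat_0_le_iff)
  then have "f x powr \<beta> \<le> 1"
    using f_pos[of x] f_le_1[of x] powr_mono2[of \<beta> "f x" 1] by simp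
  moreover have "\<bar>x\<bar> ^ k \<le> M ^ k"
    using True by (intro power_mono) auto
  ultimately have "\<bar>x\<bar> ^ k * f x powr \<beta> \<le> M ^ k * 1"
    using M_pos by (intro mult_mono) auto
  then have "\<bar>x ^ k * f x powr \<beta>\<bar> \<le> M ^ k"
    by (simp add: abs_mult power_abs)
  moreover have "indicator {-M..M} x = (1::real)"
    using True by (simp add: abs_le_iff)
  ultimately show ?thesis by (simp add: add_increasing2)
next
  case False
  define b where "b = (real k + 2) / \<gamma>"
  have x: "\<bar>x\<bar> > 0" "M < \<bar>x\<bar>" using False M_pos by auto
  have "b > 0" using \<gamma>_pos by (simp add: b_def)
  have "f x < K * \<bar>x\<bar> powr (-\<gamma>)"
    using tail[OF x(2)] x by (simp add: powr_minus field_simps)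
  then have "f x powr \<beta> \<le> (K * \<bar>x\<bar> powr (-\<gamma>)) powr b"
    using f_pos[of x] f_le_1[of x] \<beta> \<open>b > 0\<close>
    by (intro order.trans[OF powr_mono' powr_mono2]) (auto simp: b_def)
  also have "\<dots> = K powr b * \<bar>x\<bar> powr (- (real k + 2))"
    using K_pos x \<gamma>_pos by (simp add: powr_mult powr_powr b_def)
  finally have "\<bar>x ^ k * f x powr \<beta>\<bar> \<le> \<bar>x\<bar> powr real k * (K powr b * \<bar>x\<bar> powr (- (real k + 2)))"
    using x by (simp add: abs_mult power_abs powr_realpow mult_left_mono)
  also have "\<dots> = K powr b * \<bar>x\<bar> powr -2"
    using x by (simp add: powr_add[symmetric])
  finally have "\<bar>x ^ k * f x powr \<beta>\<bar> \<le> K powr b * \<bar>x\<bar> powr -2" .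
  moreover have "indicator {-M..M} x = (0::real)" "indicator {x. M \<le> \<bar>x\<bar>} x = (1::real)"
    using False by (auto simp: abs_le_iff)
  ultimately show ?thesis by (simp add: b_def)
qed

lemma integrable_moment_powr:
  assumes "(real k + 2) / \<gamma> \<le> \<beta>"
  shows "integrable lborel (\<lambda>x. x ^ k * f x powr \<beta>)"
proof (rule Bochner_Integration.integrable_bound)
  show "integrable lborel (\<lambda>x. indicator {-M..M} x * M ^ k
      + K powr ((real k + 2) / \<gamma>) * (indicator {x. M \<le> \<bar>x\<bar>} x * \<bar>x\<bar> powr -2) :: real)"
    using M_pos by (intro Bochner_Integration.integrable_add integrable_mult_left integrable_real_indicator
        integrable_mult_right integrable_inverse_square_outside) auto
  show "AE x in lborel. norm (x ^ k * f x powr \<beta>)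
      \<le> norm (indicator {-M..M} x * M ^ k + K powr ((real k + 2) / \<gamma>) * (indicator {x. M \<le> \<bar>x\<bar>} x * \<bar>x\<bar> powr -2))"
    using moment_integrand_bound[OF assms] by (auto intro!: always_eventually order.trans[OF _ abs_ge_self])
qed simp

lemma tendsto_rescaled_inner_moment:
  "((\<lambda>\<beta>. sqrt \<beta> ^ (k + 1) * (\<integral>x. x ^ k * (indicator {-M..M} x * f x powr \<beta>) \<partial>lborel))
     \<longlongrightarrow> (\<integral>u. u ^ k * exp (H * u\<^sup>2 / 2) \<partial>lborel)) at_top"
proof -
  define s where "s \<beta> u = u ^ k * (indicator {-M..M} (u / sqrt \<beta>) * f (u / sqrt \<beta>) powr \<beta>)" for \<beta> u :: real
  have "((\<lambda>\<beta>. \<integral>u. s \<beta> u \<partial>lborel) \<longlongrightarrow> (\<integral>u. u ^ k * exp (H * u\<^sup>2 / 2) \<partial>lborel)) at_top"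
  proof (rule integral_dominated_convergence_at_top[where w="\<lambda>u. \<bar>u\<bar> ^ k * exp (- (c * u\<^sup>2))"])
    show "integrable lborel (\<lambda>u. \<bar>u\<bar> ^ k * exp (- (c * u\<^sup>2)))"
      by (rule integrable_power_exp_quadratic[OF c_pos])
    show "AE u in lborel. ((\<lambda>\<beta>. s \<beta> u) \<longlongrightarrow> u ^ k * exp (H * u\<^sup>2 / 2)) at_top"
    proof (rule always_eventually, rule allI)
      fix u :: real
      have "\<forall>\<^sub>F \<beta> in at_top. \<bar>u\<bar> / M \<le> sqrt \<beta>"
        by real_asymp
      then have "\<forall>\<^sub>F \<beta> in at_top. u ^ k * f (u / sqrt \<beta>) powr \<beta> = s \<beta> u"
        using eventually_gt_at_top[of 0]
      proof eventually_elim
        case (elim \<beta>)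
        then have "\<bar>u\<bar> \<le> M * sqrt \<beta>"
          using M_pos by (simp add: divide_le_eq mult.commute)
        then have "\<bar>u / sqrt \<beta>\<bar> \<le> M"
          using elim by (simp add: abs_divide divide_le_eq mult.commute)
        then have "u / sqrt \<beta> \<in> {-M..M}"
          by (metis abs_le_iff atLeastAtMost_iff minus_le_iff)
        then show ?case by (simp add: s_def)
      qed
      then show "((\<lambda>\<beta>. s \<beta> u) \<longlongrightarrow> u ^ k * exp (H * u\<^sup>2 / 2)) at_top"
        by (rule Lim_transform_eventually[OF tendsto_mult_left[OF tendsto_powr_rescaled_f]])
    qed
    show "\<forall>\<^sub>F \<beta> in at_top. AE u in lborel. norm (s \<beta> u) \<le> \<bar>u\<bar> ^ k * exp (- (c * u\<^sup>2))"
      using eventually_gt_at_top[of 0]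
    proof eventually_elim
      case (elim \<beta>)
      have "f (u / sqrt \<beta>) powr \<beta> \<le> exp (- (c * u\<^sup>2))" if "\<bar>u / sqrt \<beta>\<bar> \<le> M" for u
      proof -
        have "f (u / sqrt \<beta>) powr \<beta> \<le> exp (- (c * (u / sqrt \<beta>)\<^sup>2)) powr \<beta>"
          using gaussian_cap[OF that] f_pos elim by (intro powr_mono2) (auto intro: less_imp_le)
        also have "\<dots> = exp (- (c * u\<^sup>2))"
          using elim by (simp add: powr_def power_divide)
        finally show ?thesis .
      qed
      then show ?case
        by (intro always_eventually allI)
          (auto simp: s_def indicator_def abs_mult power_abs abs_le_iff intro!: mult_left_mono)
    qed
  qed (auto simp: s_def)
  moreover have "\<forall>\<^sub>F \<beta> in at_top. (\<integral>u. s \<beta> u \<partial>lborel)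
      = sqrt \<beta> ^ (k + 1) * (\<integral>x. x ^ k * (indicator {-M..M} x * f x powr \<beta>) \<partial>lborel)"
    using eventually_gt_at_top[of 0]
  proof eventually_elim
    case (elim \<beta>)
    then show ?case
      using lborel_integral_rescaled_moment[of "sqrt \<beta>" k "\<lambda>x. indicator {-M..M} x * f x powr \<beta>"]
      by (simp add: s_def)
  qed
  ultimately show ?thesis by (rule Lim_transform_eventually)
qed

lemma integrable_restricted_moment_powr:
  assumes "(real k + 2) / \<gamma> \<le> \<beta>" and "A \<in> sets borel"
  shows "integrable lborel (\<lambda>x. x ^ k * (indicator A x * f x powr \<beta>))"
  using integrable_mult_indicator[of A lborel, OF _ integrable_moment_powr[OF assms(1)]] assms(2)
  by (simp add: mult.left_commute)

lemma tendsto_rescaled_outer_moment: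
  "((\<lambda>\<beta>. sqrt \<beta> ^ (k + 1) * (\<integral>x. x ^ k * (indicator {x. M < \<bar>x\<bar>} x * f x powr \<beta>) \<partial>lborel))
     \<longlongrightarrow> 0) at_top"
proof -
  define b where "b = (real k + 2) / \<gamma>"
  define Out where "Out = {x::real. M < \<bar>x\<bar>}"
  have Out: "Out \<in> sets borel" unfolding Out_def by measurable
  define Z where "Z = (\<integral>x. \<bar>x ^ k * (indicator Out x * f x powr b)\<bar> \<partial>lborel)"
  \<comment> \<open>outside \<open>[-M, M]\<close> the density decays geometrically in \<open>\<beta>\<close>: \<open>f\<^sup>\<beta> \<le> q\<^sup>\<beta>\<^sup>-\<^sup>b f\<^sup>b\<close>\<close>
  have bound: "\<bar>\<integral>x. x ^ k * (indicator Out x * f x powr \<beta>) \<partial>lborel\<bar> \<le> q powr (\<beta> - b) * Z"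
    if "b \<le> \<beta>" for \<beta>
  proof -
    have "\<bar>\<integral>x. x ^ k * (indicator Out x * f x powr \<beta>) \<partial>lborel\<bar>
        \<le> (\<integral>x. \<bar>x ^ k * (indicator Out x * f x powr \<beta>)\<bar> \<partial>lborel)"
      by (rule integral_abs_bound)
    also have "\<dots> \<le> (\<integral>x. q powr (\<beta> - b) * \<bar>x ^ k * (indicator Out x * f x powr b)\<bar> \<partial>lborel)"
    proof (rule integral_mono)
      show "integrable lborel (\<lambda>x. \<bar>x ^ k * (indicator Out x * f x powr \<beta>)\<bar>)"
        "integrable lborel (\<lambda>x. q powr (\<beta> - b) * \<bar>x ^ k * (indicator Out x * f x powr b)\<bar>)"
        using that Out by (auto intro!: integrable_restricted_moment_powr simp: b_def)
      fix x
      show "\<bar>x ^ k * (indicator Out x * f x powr \<beta>)\<bar> \<le> q powr (\<beta> - b) * \<bar>x ^ k * (indicator Out x * f x powr b)\<bar>"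
      proof (cases "x \<in> Out")
        case True
        have "f x powr \<beta> = f x powr (\<beta> - b) * f x powr b"
          using f_pos[of x] by (simp add: powr_add[symmetric])
        also have "\<dots> \<le> q powr (\<beta> - b) * f x powr b"
          using True that f_le_q f_pos[of x] by (intro mult_right_mono powr_mono2) (auto simp: Out_def)
        finally show ?thesis
          using True by (simp add: abs_mult mult.left_commute mult_left_mono)
      qed simp
    qed
    finally show ?thesis by (simp add: Z_def)
  qed
  have "((\<lambda>\<beta>. sqrt \<beta> ^ (k + 1) * q powr (\<beta> - b) * Z) \<longlongrightarrow> 0) at_top"
    using q by real_asymp
  moreover have "\<forall>\<^sub>F \<beta> in at_top. norm (sqrt \<beta> ^ (k + 1) * (\<integral>x. x ^ k * (indicator Out x * f x powr \<beta>) \<partial>lborel))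
      \<le> sqrt \<beta> ^ (k + 1) * q powr (\<beta> - b) * Z"
    using eventually_ge_at_top[of b]
  proof eventually_elim
    case (elim \<beta>)
    have "0 \<le> b" using \<gamma>_pos by (simp add: b_def)
    then have "norm (sqrt \<beta> ^ (k + 1) * (\<integral>x. x ^ k * (indicator Out x * f x powr \<beta>) \<partial>lborel))
        = sqrt \<beta> ^ (k + 1) * \<bar>\<integral>x. x ^ k * (indicator Out x * f x powr \<beta>) \<partial>lborel\<bar>"
      using elim by (simp add: abs_mult)
    also have "\<dots> \<le> sqrt \<beta> ^ (k + 1) * (q powr (\<beta> - b) * Z)"
      using elim \<open>0 \<le> b\<close> by (intro mult_left_mono bound) auto
    finally show ?case by (simp add: mult.assoc)
  qed
  ultimately show ?thesis
    unfolding Out_def by (rule Lim_null_comparison[rotated])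
qed

lemma tendsto_rescaled_moment:
  "((\<lambda>\<beta>. sqrt \<beta> ^ (k + 1) * (\<integral>x. x ^ k * f x powr \<beta> \<partial>lborel))
     \<longlongrightarrow> (\<integral>u. u ^ k * exp (H * u\<^sup>2 / 2) \<partial>lborel)) at_top"
proof -
  have "\<forall>\<^sub>F \<beta> in at_top.
      sqrt \<beta> ^ (k + 1) * (\<integral>x. x ^ k * (indicator {-M..M} x * f x powr \<beta>) \<partial>lborel)
      + sqrt \<beta> ^ (k + 1) * (\<integral>x. x ^ k * (indicator {x. M < \<bar>x\<bar>} x * f x powr \<beta>) \<partial>lborel)
      = sqrt \<beta> ^ (k + 1) * (\<integral>x. x ^ k * f x powr \<beta> \<partial>lborel)"
    using eventually_ge_at_top[of "(real k + 2) / \<gamma>"]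
  proof eventually_elim
    case (elim \<beta>)
    have "{x. M < \<bar>x\<bar>} \<in> sets borel" by measurable
    then have "(\<integral>x. x ^ k * (indicator {-M..M} x * f x powr \<beta>) \<partial>lborel)
        + (\<integral>x. x ^ k * (indicator {x. M < \<bar>x\<bar>} x * f x powr \<beta>) \<partial>lborel)
        = (\<integral>x. x ^ k * (indicator {-M..M} x * f x powr \<beta>) + x ^ k * (indicator {x. M < \<bar>x\<bar>} x * f x powr \<beta>) \<partial>lborel)"
      using elim by (intro Bochner_Integration.integral_add[symmetric] integrable_restricted_moment_powr) auto
    also have "\<dots> = (\<integral>x. x ^ k * f x powr \<beta> \<partial>lborel)"
      by (intro Bochner_Integration.integral_cong) (auto simp: indicator_def)
    finally show ?case by (simp add: distrib_left[symmetric])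
  qed
  moreover have "((\<lambda>\<beta>. sqrt \<beta> ^ (k + 1) * (\<integral>x. x ^ k * (indicator {-M..M} x * f x powr \<beta>) \<partial>lborel)
      + sqrt \<beta> ^ (k + 1) * (\<integral>x. x ^ k * (indicator {x. M < \<bar>x\<bar>} x * f x powr \<beta>) \<partial>lborel))
      \<longlongrightarrow> (\<integral>u. u ^ k * exp (H * u\<^sup>2 / 2) \<partial>lborel) + 0) at_top"
    by (intro tendsto_add tendsto_rescaled_inner_moment tendsto_rescaled_outer_moment)
  ultimately show ?thesis
    by (simp add: tendsto_cong)
qed

lemma Nconst_pos:
  assumes "2 / \<gamma> \<le> \<beta>"
  shows "Nconst f \<beta> > 0"
proof -
  have int: "integrable lborel (\<lambda>x. f x powr \<beta>)"
    using integrable_moment_powr[of 0 \<beta>] assms by simp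
  have "(\<integral>x. f x powr \<beta> \<partial>lborel) \<noteq> 0"
  proof
    assume "(\<integral>x. f x powr \<beta> \<partial>lborel) = 0"
    then have "AE x in lborel. f x powr \<beta> = 0"
      using integral_nonneg_eq_0_iff_AE[OF int] by simp
    then have "AE x::real in lborel. False"
      by (rule eventually_mono) (metis f_pos less_irrefl powr_eq_0_iff)
    then have "ae_filter (lborel :: real measure) = bot"
      using trivial_limit_def by blast
    then show False
      by (simp add: ae_filter_eq_bot_iff)
  qed
  then show ?thesis
    unfolding Nconst_def by (simp add: order.not_eq_order_implies_strict)
qed

lemma tilted_measure_moment:
  assumes \<beta>: "(real k + 2) / \<gamma> \<le> \<beta>"
  shows "prob_space (tilted_measure f \<beta>)"
    and "integrable (tilted_measure f \<beta>) (\<lambda>x. x ^ k)"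
    and "(\<integral>x. x ^ k \<partial>tilted_measure f \<beta>) = (\<integral>x. x ^ k * f x powr \<beta> \<partial>lborel) / Nconst f \<beta>"
proof -
  have "2 / \<gamma> \<le> (real k + 2) / \<gamma>" using \<gamma>_pos by (intro divide_right_mono) auto
  then have N: "Nconst f \<beta> > 0" and int: "integrable lborel (\<lambda>x. f x powr \<beta>)"
    using \<beta> Nconst_pos integrable_moment_powr[of 0 \<beta>] by simp_all
  define g where "g x = f x powr \<beta> / Nconst f \<beta>" for x
  have T: "tilted_measure f \<beta> = density lborel g" and g: "\<And>x. 0 \<le> g x"
    using N by (simp_all add: tilted_measure_def g_def[abs_def])
  have [measurable]: "g \<in> borel_measurable borel"
    unfolding g_def by measurable
  have "emeasure (density lborel g) UNIV = ennreal (\<integral>x. g x \<partial>lborel)"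
    using int g by (simp add: emeasure_density g_def nn_integral_eq_integral)
  also have "(\<integral>x. g x \<partial>lborel) = 1" using N by (simp add: g_def Nconst_def)
  finally show "prob_space (tilted_measure f \<beta>)" unfolding T by (intro prob_spaceI) simp
  have "integrable lborel (\<lambda>x. g x * x ^ k)"
    using integrable_moment_powr[OF \<beta>] by (simp add: g_def mult.commute)
  then show "integrable (tilted_measure f \<beta>) (\<lambda>x. x ^ k)"
    unfolding T using g by (subst integrable_density) auto
  show "(\<integral>x. x ^ k \<partial>tilted_measure f \<beta>) = (\<integral>x. x ^ k * f x powr \<beta> \<partial>lborel) / Nconst f \<beta>"
    unfolding T using g by (subst integral_density) (auto simp: g_def mult.commute)
qed

lemma tendsto_tilted_moment:
  "((\<lambda>\<beta>. sqrt \<beta> ^ k * (\<integral>x. x ^ k \<partial>tilted_measure f \<beta>))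
     \<longlongrightarrow> (\<integral>u. u ^ k * exp (H * u\<^sup>2 / 2) \<partial>lborel) / (\<integral>u. exp (H * u\<^sup>2 / 2) \<partial>lborel)) at_top"
proof -
  have "(\<integral>u. exp (H * u\<^sup>2 / 2) \<partial>lborel) \<noteq> 0"
    using integral_even_power_exp_quadratic[OF H_neg, of 0] H_neg by simp
  then have "((\<lambda>\<beta>. (sqrt \<beta> ^ (k + 1) * (\<integral>x. x ^ k * f x powr \<beta> \<partial>lborel))
      / (sqrt \<beta> ^ (0 + 1) * (\<integral>x. x ^ 0 * f x powr \<beta> \<partial>lborel)))
      \<longlongrightarrow> (\<integral>u. u ^ k * exp (H * u\<^sup>2 / 2) \<partial>lborel) / (\<integral>u. u ^ 0 * exp (H * u\<^sup>2 / 2) \<partial>lborel)) at_top"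
    by (intro tendsto_divide tendsto_rescaled_moment) simp
  moreover have "\<forall>\<^sub>F \<beta> in at_top. (sqrt \<beta> ^ (k + 1) * (\<integral>x. x ^ k * f x powr \<beta> \<partial>lborel))
      / (sqrt \<beta> ^ (0 + 1) * (\<integral>x. x ^ 0 * f x powr \<beta> \<partial>lborel))
      = sqrt \<beta> ^ k * (\<integral>x. x ^ k \<partial>tilted_measure f \<beta>)"
    using eventually_ge_at_top[of "(real k + 2) / \<gamma>"] eventually_gt_at_top[of 0]
    by eventually_elim (simp add: tilted_measure_moment(3) Nconst_def)
  ultimately show ?thesis by (simp add: tendsto_cong)
qed

lemma prob_T1_gt_le:
  assumes \<beta>: "10 / \<gamma> \<le> \<beta>" and \<epsilon>: "\<epsilon> > 0"
  shows "measure (joint_measure f H \<beta> d)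
           {\<omega> \<in> space (joint_measure f H \<beta> d). \<bar>\<Sum>i<d. \<beta> * a * ((snd \<omega> i) ^ 4 - (fst \<omega> i) ^ 4)\<bar> > \<epsilon>}
         \<le> 3 * (\<beta> * a)\<^sup>2 * (real d * (\<integral>x. x ^ 8 \<partial>density lborel (normal_density 0 (1 / sqrt (\<beta> * \<bar>H\<bar>))))
               + real d * (\<integral>x. x ^ 8 \<partial>tilted_measure f \<beta>)
               + (real d * ((\<integral>x. x ^ 4 \<partial>density lborel (normal_density 0 (1 / sqrt (\<beta> * \<bar>H\<bar>))))
                            - (\<integral>x. x ^ 4 \<partial>tilted_measure f \<beta>)))\<^sup>2) / \<epsilon>\<^sup>2"
proof -
  have k: "(real k + 2) / \<gamma> \<le> \<beta>" if "k \<le> 8" for k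
  proof -
    have "(real k + 2) / \<gamma> \<le> 10 / \<gamma>"
      using that \<gamma>_pos by (intro divide_right_mono) auto
    then show ?thesis using \<beta> by linarith
  qed
  have T: "prob_space (tilted_measure f \<beta>)"
    "integrable (tilted_measure f \<beta>) (\<lambda>x. x ^ 4)" "integrable (tilted_measure f \<beta>) (\<lambda>x. x ^ 8)"
    using k[of 4] k[of 8] tilted_measure_moment[of 4 \<beta>] tilted_measure_moment[of 8 \<beta>] by simp_all
  have "0 < 10 / \<gamma>" using \<gamma>_pos by simp
  then have "\<beta> > 0" using \<beta> by linarith
  then have \<sigma>: "0 < 1 / sqrt (\<beta> * \<bar>H\<bar>)"
    using H_neg by (simp add: mult_pos_neg)
  have G: "integrable (density lborel (normal_density 0 (1 / sqrt (\<beta> * \<bar>H\<bar>)))) (\<lambda>x. x ^ 4)"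
    "integrable (density lborel (normal_density 0 (1 / sqrt (\<beta> * \<bar>H\<bar>)))) (\<lambda>x. x ^ 8)"
    using normal_density_even_moment(1)[OF \<sigma>, of 2] normal_density_even_moment(1)[OF \<sigma>, of 4] by simp_all
  have square: "(\<lambda>x. (x ^ 4)\<^sup>2) = (\<lambda>x::real. x ^ 8)"
    by (simp add: fun_eq_iff flip: power_mult)
  show ?thesis
    using prob_abs_sum_diff_gt_le[where g="\<lambda>x. x ^ 4" and a="\<beta> * a" and d=d and \<epsilon>=\<epsilon>,
        OF T(1) prob_space_normal_density[OF \<sigma>]] T G \<epsilon>
    unfolding square joint_measure_def by simp
qed

theorem T1_tendsto_0_in_probability:
  assumes l: "l > 0" and \<epsilon>: "\<epsilon> > 0"
  shows "((\<lambda>d. measure (joint_measure f H (l * real d) d)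
            {\<omega> \<in> space (joint_measure f H (l * real d) d).
               \<bar>\<Sum>i<d. (l * real d) * a * ((snd \<omega> i) ^ 4 - (fst \<omega> i) ^ 4)\<bar> > \<epsilon>})
          \<longlongrightarrow> 0) sequentially"
proof -
  define g where "g k \<beta> = (\<integral>x. x ^ k \<partial>density lborel (normal_density 0 (1 / sqrt (\<beta> * \<bar>H\<bar>))))" for k \<beta>
  define m where "m k \<beta> = (\<integral>x. x ^ k \<partial>tilted_measure f \<beta>)" for k \<beta>
  define X where "X \<beta> = (\<beta> / l) * g 8 \<beta> + (\<beta> / l) * m 8 \<beta> + ((\<beta> / l) * (g 4 \<beta> - m 4 \<beta>))\<^sup>2" for \<beta>
  define R where "R \<beta> = 3 * (\<beta> * a)\<^sup>2 * X \<beta> / \<epsilon>\<^sup>2" for \<beta>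
  have gauss: "((\<lambda>\<beta>. \<beta>\<^sup>2 * g 4 \<beta>) \<longlongrightarrow> 3 / H\<^sup>2) at_top" "((\<lambda>\<beta>. \<beta> ^ 4 * g 8 \<beta>) \<longlongrightarrow> 105 / H ^ 4) at_top"
    by (rule tendsto_eventually, use eventually_gt_at_top[of 0] in eventually_elim,
        use H_neg normal_density_rescaled_moment[of _ H 2] normal_density_rescaled_moment[of _ H 4] in
        \<open>simp add: g_def eval_nat_numeral fact_numeral power_mult_distrib\<close>)+
  have "\<forall>\<^sub>F \<beta> in at_top. sqrt \<beta> ^ 4 * m 4 \<beta> = \<beta>\<^sup>2 * m 4 \<beta>"
    "\<forall>\<^sub>F \<beta> in at_top. sqrt \<beta> ^ 8 * m 8 \<beta> = \<beta> ^ 4 * m 8 \<beta>"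
    using eventually_ge_at_top[of 0] by (eventually_elim, simp add: sqrt_even_power)+
  then have tilted: "((\<lambda>\<beta>. \<beta>\<^sup>2 * m 4 \<beta>) \<longlongrightarrow> 3 / H\<^sup>2) at_top"
    "((\<lambda>\<beta>. \<beta> ^ 4 * m 8 \<beta>) \<longlongrightarrow>
       (\<integral>u. u ^ 8 * exp (H * u\<^sup>2 / 2) \<partial>lborel) / (\<integral>u. exp (H * u\<^sup>2 / 2) \<partial>lborel)) at_top"
    using tendsto_tilted_moment[of 4] tendsto_tilted_moment[of 8] gaussian_fourth_moment_ratio[OF H_neg]
    unfolding m_def by (auto elim: Lim_transform_eventually)
  have "((\<lambda>\<beta>. \<beta>\<^sup>2 * X \<beta>) \<longlongrightarrow> 0) at_top"
    unfolding X_def by (rule deviation_bound_tendsto_0[OF gauss(1) tilted(1) gauss(2) tilted(2) l])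
  then have "((\<lambda>\<beta>. 3 * a\<^sup>2 * (\<beta>\<^sup>2 * X \<beta>) / \<epsilon>\<^sup>2) \<longlongrightarrow> 0) at_top"
    by (auto intro!: tendsto_mult_right_zero tendsto_divide_zero)
  moreover have "(\<lambda>\<beta>. 3 * a\<^sup>2 * (\<beta>\<^sup>2 * X \<beta>) / \<epsilon>\<^sup>2) = R"
    by (simp add: fun_eq_iff R_def power_mult_distrib)
  ultimately have "(R \<longlongrightarrow> 0) at_top"
    by (simp only:)
  moreover have lim: "filterlim (\<lambda>d. l * real d) at_top sequentially"
    by (rule filterlim_tendsto_pos_mult_at_top[OF tendsto_const l filterlim_real_sequentially])
  ultimately have R: "((\<lambda>d. R (l * real d)) \<longlongrightarrow> 0) sequentially"
    by (rule filterlim_compose)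
  have bound: "\<forall>\<^sub>F d in sequentially. measure (joint_measure f H (l * real d) d)
      {\<omega> \<in> space (joint_measure f H (l * real d) d).
         \<bar>\<Sum>i<d. (l * real d) * a * ((snd \<omega> i) ^ 4 - (fst \<omega> i) ^ 4)\<bar> > \<epsilon>} \<le> R (l * real d)"
    using filterlim_at_top[THEN iffD1, OF lim, rule_format, of "10 / \<gamma>"]
  proof eventually_elim
    case (elim d)
    have "l * real d / l = real d" using l by simp
    then have "R (l * real d) = 3 * (l * real d * a)\<^sup>2 * (real d * g 8 (l * real d) + real d * m 8 (l * real d)
        + (real d * (g 4 (l * real d) - m 4 (l * real d)))\<^sup>2) / \<epsilon>\<^sup>2"
      by (simp only: R_def X_def)
    then show ?case
      using prob_T1_gt_le[OF elim \<epsilon>, of d a] by (simp only: g_def m_def)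
  qed
  show ?thesis
    by (rule tendsto_sandwich[OF _ bound tendsto_const R]) (simp add: measure_nonneg)
qed

end

theorem lemma2:
  fixes f :: "real \<Rightarrow> real" and L \<gamma> M K \<delta>\<^sub>2 l :: real
  defines "h \<equiv> (\<lambda>x. ln (f x))"
  defines "H \<equiv> (deriv ^^ 2) h 0"
  assumes f_pos: "\<forall>x. f x > 0"
    and f_C5: "\<forall>k<5. \<forall>x. ((deriv ^^ k) f has_real_derivative (deriv ^^ Suc k) f x) (at x)"
    and f_C5_cont: "continuous_on UNIV ((deriv ^^ 5) f)"
    and f0: "f 0 = 1" and f'0: "deriv f 0 = 0"
    and unique_max: "\<forall>x. x \<noteq> 0 \<longrightarrow> f x < f 0"
    and H_neg: "H < 0"
    and L_pos: "L > 0" and h5_bound: "\<forall>x. \<bar>(deriv ^^ 5) h x\<bar> < L"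
    and tail_pos: "\<gamma> > 0" "M > 0" "K > 0"
    and tails: "\<forall>x. \<bar>x\<bar> > M \<longrightarrow> f x * \<bar>x\<bar> powr \<gamma> < K"
    and cap_delta: "0 < \<delta>\<^sub>2" "\<delta>\<^sub>2 < M"
    and cap_inner: "\<forall>x. \<bar>x\<bar> < \<delta>\<^sub>2 \<longrightarrow> f x \<le> exp (- (x\<^sup>2 * \<bar>H\<bar> / 4))"
    and cap_outer: "\<forall>x. \<delta>\<^sub>2 \<le> \<bar>x\<bar> \<and> \<bar>x\<bar> \<le> M \<longrightarrow> f x \<le> exp (- (\<delta>\<^sub>2\<^sup>2 * \<bar>H\<bar> / 4))"
    and l_pos: "l > 0"
  shows "\<forall>\<epsilon>>0. ((\<lambda>d. measure (joint_measure f H (l * real d) d)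
            {\<omega> \<in> space (joint_measure f H (l * real d) d).
               \<bar>\<Sum>i<d. (l * real d) * (deriv ^^ 4) h 0 / 24 * ((snd \<omega> i)^4 - (fst \<omega> i)^4)\<bar> > \<epsilon>})
          \<longlongrightarrow> 0) sequentially"
proof -
  have f': "(f has_real_derivative deriv f x) (at x)" for x
    using spec[OF f_C5, of 0] by simp
  have f'': "(deriv f has_real_derivative (deriv ^^ 2) f x) (at x)" for x
    using spec[OF f_C5, of 1] by (simp add: numeral_2_eq_2)
  have f''': "((deriv ^^ 2) f has_real_derivative (deriv ^^ 3) f x) (at x)" for x
    using spec[OF f_C5, of 2] by (simp add: numeral_3_eq_3)
  have cont: "continuous_on UNIV f"
    by (intro continuous_at_imp_continuous_on ballI DERIV_isCont[OF f'])
  obtain q where q: "0 < q" "q < 1" "\<And>x. M < \<bar>x\<bar> \<Longrightarrow> f x \<le> q"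
    by (rule uniform_bound_lt_1_outside[OF cont _ tail_pos(2,3,1)]) (use unique_max f0 tails f_pos in auto)
  interpret peaked_density f H M K \<gamma> "\<delta>\<^sub>2\<^sup>2 * \<bar>H\<bar> / (4 * M\<^sup>2)" q
  proof
    show "((\<lambda>\<beta>. f (u / sqrt \<beta>) powr \<beta>) \<longlongrightarrow> exp (H * u\<^sup>2 / 2)) at_top" for u
      unfolding H_def h_def using f_pos f0 f'0
      by (intro tendsto_powr_rescaled f' f'' DERIV_isCont[OF f''']) auto
    show "f x \<le> exp (- (\<delta>\<^sub>2\<^sup>2 * \<bar>H\<bar> / (4 * M\<^sup>2) * x\<^sup>2))" if "\<bar>x\<bar> \<le> M" for x
      by (rule dutchmans_cap_imp_gaussian_bound[OF cap_delta cap_inner cap_outer that])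
    show "0 < \<delta>\<^sub>2\<^sup>2 * \<bar>H\<bar> / (4 * M\<^sup>2)"
      using cap_delta H_neg by (intro divide_pos_pos mult_pos_pos) auto
    show "f x \<le> 1" for x
      using unique_max f0 by (cases "x = 0") (auto intro: less_imp_le)
  qed (use f_pos H_neg tail_pos tails cap_delta q borel_measurable_continuous_onI[OF cont] in auto)
  show ?thesis
    using T1_tendsto_0_in_probability[OF l_pos, where a="(deriv ^^ 4) h 0 / 24"]
    by (simp only: times_divide_eq_right) blast
qed

end
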